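(* Let $\epsilon>0$, $B\in\mathbb{R}$, $s\in\mathbb{N}$, and let $v_1,\dots,v_N\in\mathbb{C}^{2^s}$ be orthonormal vectors such that $QK^{\epsilon}(|v_i\rangle\langle v_i|)\le B$ for all $i\le N$. Then $N\le\epsilon^{-1}2^{B}$.
   Context: Let $\mathbb{U}$ be a fixed universal prefix-free Turing machine. Finite sets of vectors with complex algebraic entries are coded by natural numbers via a fixed canonical effective indexing; $\mathbb{U}(\sigma)\downarrow=F$ means that $\mathbb{U}$ on input $\sigma$ halts and outputs the code of $F$. $\mathbb{C}^{2^n}_{alg}$ denotes the set of vectors in $\mathbb{C}^{2^n}$ all of whose entries are complex algebraic numbers. All logarithms are base 2. For a density matrix $\tau$ on $\mathbb{C}^{2^{n}}$ write $|\tau|=n$. For $\epsilon>0$ define $QK^{\epsilon}(\tau)=\inf\{|\sigma|+\log|F| : \mathbb{U}(\sigma)\downarrow=F,\ F \text{ an orthonormal subset of } \mathbb{C}^{2^{|\tau|}}_{alg},\ \sum_{v\in F}\langle v|\tau|v\rangle>\epsilon\}$, with $\inf\emptyset=\infty$. *)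

theory Defs
  imports "HOL-Analysis.Analysis" "HOL-Computational_Algebra.Polynomial"
    "HOL-Library.Extended_Real"
begin

text \<open>Vectors of C^d are represented as functions nat => complex vanishing at indices >= d.
  Matrices on C^d as functions nat => nat => complex (only entries below d matter).\<close>

definition cvec :: "nat \<Rightarrow> (nat \<Rightarrow> complex) \<Rightarrow> bool" where
  "cvec d v \<longleftrightarrow> (\<forall>j\<ge>d. v j = 0)"

definition cinner :: "nat \<Rightarrow> (nat \<Rightarrow> complex) \<Rightarrow> (nat \<Rightarrow> complex) \<Rightarrow> complex" where
  "cinner d v w = (\<Sum>j<d. cnj (v j) * w j)"

definition alg_vec :: "nat \<Rightarrow> (nat \<Rightarrow> complex) \<Rightarrow> bool" where
  "alg_vec d v \<longleftrightarrow> cvec d v \<and> (\<forall>j<d. algebraic (v j))"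

definition orthonormal_set :: "nat \<Rightarrow> (nat \<Rightarrow> complex) set \<Rightarrow> bool" where
  "orthonormal_set d F \<longleftrightarrow> (\<forall>x\<in>F. \<forall>y\<in>F. cinner d x y = (if x = y then 1 else 0))"

definition expect :: "nat \<Rightarrow> (nat \<Rightarrow> complex) \<Rightarrow> (nat \<Rightarrow> nat \<Rightarrow> complex) \<Rightarrow> complex" where
  "expect d w \<tau> = (\<Sum>i<d. \<Sum>j<d. cnj (w i) * \<tau> i j * w j)"

definition pure_dm :: "(nat \<Rightarrow> complex) \<Rightarrow> (nat \<Rightarrow> nat \<Rightarrow> complex)" where
  "pure_dm v = (\<lambda>i j. v i * cnj (v j))"

definition prefix_free :: "(bool list \<Rightarrow> nat option) \<Rightarrow> bool" where
  "prefix_free U \<longleftrightarrow> (\<forall>\<sigma> \<rho>. U \<sigma> \<noteq> None \<longrightarrow> U (\<sigma> @ \<rho>) \<noteq> None \<longrightarrow> \<rho> = [])"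

text \<open>QK^eps(tau) for a density matrix tau on C^(2^n) (n = |tau|), relative to the machine U
  and the decoding code of natural numbers into finite sets of vectors.
  The infimum of the empty set in ereal is \<infinity>.\<close>
definition QK :: "(bool list \<Rightarrow> nat option) \<Rightarrow> (nat \<Rightarrow> (nat \<Rightarrow> complex) set) \<Rightarrow> real
    \<Rightarrow> nat \<Rightarrow> (nat \<Rightarrow> nat \<Rightarrow> complex) \<Rightarrow> ereal" where
  "QK U code \<epsilon> n \<tau> = Inf {ereal (real (length \<sigma>) + log 2 (real (card F))) | \<sigma> F.
      (\<exists>c. U \<sigma> = Some c \<and> code c = F) \<and> finite F \<and> (\<forall>v\<in>F. alg_vec (2^n) v) \<and>
      orthonormal_set (2^n) F \<and> Re (\<Sum>v\<in>F. expect (2^n) v \<tau>) > \<epsilon>}"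

end

theory Submission
  imports Defs
begin

text \<open>For B' > B each v_i has a program \<sigma>_i describing an orthonormal set F_i that captures
  weight more than \<epsilon> of v_i, with |\<sigma>_i| + log |F_i| < B'. By Bessel's inequality the v_i
  sharing one program \<sigma> carry total weight at most |F| < 2^(B' - |\<sigma>|) on its set F, so
  fewer than 2^(B' - |\<sigma>|) / \<epsilon> of them use \<sigma>. Summing over programs, Kraft's inequality
  for the prefix-free machine gives N \<epsilon> \<le> 2^B', and letting B' tend to B gives the claim.\<close>

lemma cinner_sum_right:
  "cinner d x (\<lambda>j. \<Sum>i\<in>A. f i * y i j) = (\<Sum>i\<in>A. f i * cinner d x (y i))"
proof -
  have "cinner d x (\<lambda>j. \<Sum>i\<in>A. f i * y i j) = (\<Sum>j<d. \<Sum>i\<in>A. f i * (cnj (x j) * y i j))"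
    unfolding cinner_def by (simp add: sum_distrib_left mult_ac)
  also have "\<dots> = (\<Sum>i\<in>A. \<Sum>j<d. f i * (cnj (x j) * y i j))" by (rule sum.swap)
  also have "\<dots> = (\<Sum>i\<in>A. f i * cinner d x (y i))"
    unfolding cinner_def by (simp add: sum_distrib_left)
  finally show ?thesis .
qed

lemma cinner_sum_left:
  "cinner d (\<lambda>j. \<Sum>i\<in>A. f i * y i j) x = (\<Sum>i\<in>A. cnj (f i) * cinner d (y i) x)"
proof -
  have "cinner d (\<lambda>j. \<Sum>i\<in>A. f i * y i j) x = (\<Sum>j<d. \<Sum>i\<in>A. cnj (f i) * (cnj (y i j) * x j))"
    unfolding cinner_def cnj_sum sum_distrib_right sum_distrib_left by (simp add: mult_ac)
  also have "\<dots> = (\<Sum>i\<in>A. \<Sum>j<d. cnj (f i) * (cnj (y i j) * x j))" by (rule sum.swap)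
  also have "\<dots> = (\<Sum>i\<in>A. cnj (f i) * cinner d (y i) x)"
    unfolding cinner_def by (simp add: sum_distrib_left)
  finally show ?thesis .
qed

lemma cinner_diff_left: "cinner d (\<lambda>j. a j - b j) x = cinner d a x - cinner d b x"
  unfolding cinner_def by (simp add: algebra_simps sum_subtractf)

lemma cinner_diff_right: "cinner d x (\<lambda>j. a j - b j) = cinner d x a - cinner d x b"
  unfolding cinner_def by (simp add: algebra_simps sum_subtractf)

lemma cnj_mult_self: "cnj z * z = complex_of_real ((cmod z)\<^sup>2)"
  by (metis complex_norm_square mult.commute)

lemma cinner_self: "cinner d x x = of_real (\<Sum>j<d. (cmod (x j))\<^sup>2)"
  unfolding cinner_def of_real_sum by (rule sum.cong) (simp_all only: cnj_mult_self)

lemma cnj_cinner: "cnj (cinner d x y) = cinner d y x"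
  unfolding cinner_def by (simp add: mult.commute)

lemma bessel_inequality:
  fixes N :: nat
  assumes orth: "\<And>i j. i < N \<Longrightarrow> j < N \<Longrightarrow> cinner d (v i) (v j) = (if i = j then 1 else 0)"
  shows "(\<Sum>i<N. (cmod (cinner d (v i) w))\<^sup>2) \<le> Re (cinner d w w)"
proof -
  define c where "c i = cinner d (v i) w" for i
  define p where "p j = (\<Sum>i<N. c i * v i j)" for j
  have pw: "cinner d p w = (\<Sum>i<N. cnj (c i) * c i)"
    unfolding p_def cinner_sum_left c_def ..
  have wp: "cinner d w p = (\<Sum>i<N. cnj (c i) * c i)"
    unfolding p_def cinner_sum_right c_def
    by (rule sum.cong) (simp_all only: cnj_cinner mult.commute)
  have vp: "cinner d (v i) p = c i" if "i < N" for i
  proof -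
    have "cinner d (v i) p = (\<Sum>k<N. c k * cinner d (v i) (v k))"
      unfolding p_def cinner_sum_right ..
    also have "\<dots> = (\<Sum>k<N. if k = i then c k else 0)"
      by (rule sum.cong) (use orth that in auto)
    also have "\<dots> = c i" using that by (simp add: sum.delta')
    finally show ?thesis .
  qed
  have pp: "cinner d p p = (\<Sum>i<N. cnj (c i) * c i)"
    unfolding p_def[of j for j] cinner_sum_left using vp unfolding p_def by simp
  have sq: "(\<Sum>i<N. cnj (c i) * c i) = of_real (\<Sum>i<N. (cmod (c i))\<^sup>2)"
    unfolding of_real_sum by (rule sum.cong) (simp_all only: cnj_mult_self)
  have "cinner d (\<lambda>j. w j - p j) (\<lambda>j. w j - p j) = cinner d w w - (\<Sum>i<N. cnj (c i) * c i)"
    unfolding cinner_diff_left cinner_diff_right pw wp pp by simp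
  moreover have "Re (cinner d (\<lambda>j. w j - p j) (\<lambda>j. w j - p j)) \<ge> 0"
    unfolding cinner_self Re_complex_of_real by (rule sum_nonneg) simp
  ultimately show ?thesis
    unfolding sq c_def[symmetric] by simp
qed

lemma expect_pure_dm: "expect d w (pure_dm v) = of_real ((cmod (cinner d v w))\<^sup>2)"
proof -
  have "expect d w (pure_dm v) = (\<Sum>i<d. cnj (w i) * v i) * (\<Sum>j<d. cnj (v j) * w j)"
    unfolding expect_def pure_dm_def by (simp add: sum_product mult_ac)
  also have "(\<Sum>i<d. cnj (w i) * v i) = cnj (cinner d v w)"
    unfolding cinner_def by (simp add: mult.commute)
  also have "(\<Sum>j<d. cnj (v j) * w j) = cinner d v w"
    unfolding cinner_def ..
  finally show ?thesis by (simp only: cnj_mult_self)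
qed

lemma sum_weight_orthonormal_le_card:
  fixes N :: nat
  assumes orth: "\<And>i j. i < N \<Longrightarrow> j < N \<Longrightarrow> cinner d (v i) (v j) = (if i = j then 1 else 0)"
    and "I \<subseteq> {..<N}" and "finite F" and "orthonormal_set d F"
  shows "(\<Sum>i\<in>I. Re (\<Sum>w\<in>F. expect d w (pure_dm (v i)))) \<le> real (card F)"
proof -
  have "(\<Sum>i\<in>I. Re (\<Sum>w\<in>F. expect d w (pure_dm (v i))))
      = (\<Sum>w\<in>F. \<Sum>i\<in>I. (cmod (cinner d (v i) w))\<^sup>2)"
    by (simp add: Re_sum expect_pure_dm sum.swap[of _ I])
  also have "\<dots> \<le> (\<Sum>w\<in>F. \<Sum>i<N. (cmod (cinner d (v i) w))\<^sup>2)"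
    using \<open>I \<subseteq> {..<N}\<close> by (intro sum_mono sum_mono2) auto
  also have "\<dots> \<le> (\<Sum>w\<in>F. Re (cinner d w w))"
    by (intro sum_mono bessel_inequality orth)
  also have "\<dots> = real (card F)"
    using \<open>orthonormal_set d F\<close> unfolding orthonormal_set_def by simp
  finally show ?thesis .
qed

lemma kraft_inequality_bounded_length:
  fixes P :: "bool list set"
  assumes "finite P" "\<forall>p\<in>P. length p \<le> n" "\<forall>p\<in>P. \<forall>r. p @ r \<in> P \<longrightarrow> r = []"
  shows "(\<Sum>p\<in>P. (1/2::real) ^ length p) \<le> 1"
  using assms
proof (induction n arbitrary: P)
  case 0
  then have "P = {} \<or> P = {[]}" by auto
  then show ?case by auto
next
  case (Suc n)
  show ?case
  proof (cases "[] \<in> P")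
    case True
    then have "P = {[]}" using Suc.prems(3) by fastforce
    then show ?thesis by simp
  next
    case False
    define P1 where "P1 b = {x. b # x \<in> P}" for b
    have fin: "finite (P1 b)" for b
      unfolding P1_def using finite_vimageI[OF Suc.prems(1), of "Cons b"] by (simp add: vimage_def)
    have IH: "(\<Sum>p\<in>P1 b. (1/2::real) ^ length p) \<le> 1" for b
      using Suc.prems(2,3) by (intro Suc.IH fin) (auto simp: P1_def)
    have P_split: "P = Cons True ` P1 True \<union> Cons False ` P1 False"
    proof (rule set_eqI)
      fix p show "p \<in> P \<longleftrightarrow> p \<in> Cons True ` P1 True \<union> Cons False ` P1 False"
      proof (cases p)
        case (Cons b x)
        then show ?thesis by (cases b) (auto simp: P1_def)
      qed (use False in auto)
    qed
    have "(\<Sum>p\<in>P. (1/2::real) ^ length p)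
        = (\<Sum>p\<in>Cons True ` P1 True. (1/2) ^ length p) + (\<Sum>p\<in>Cons False ` P1 False. (1/2) ^ length p)"
      unfolding P_split by (rule sum.union_disjoint) (use fin in auto)
    also have "\<dots> = (1/2) * (\<Sum>p\<in>P1 True. (1/2) ^ length p) + (1/2) * (\<Sum>p\<in>P1 False. (1/2) ^ length p)"
      by (simp add: sum.reindex sum_distrib_left)
    also have "\<dots> \<le> 1" using IH[of True] IH[of False] by linarith
    finally show ?thesis .
  qed
qed

lemma kraft_inequality:
  assumes "prefix_free U" "finite P" "\<forall>p\<in>P. U p \<noteq> None"
  shows "(\<Sum>p\<in>P. (1/2::real) ^ length p) \<le> 1"
proof (rule kraft_inequality_bounded_length[OF assms(2)])
  show "\<forall>p\<in>P. length p \<le> Max (length ` P)"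
    using assms(2) by simp
  show "\<forall>p\<in>P. \<forall>r. p @ r \<in> P \<longrightarrow> r = []"
    using assms(1,3) unfolding prefix_free_def by blast
qed

lemma nat_le_powr_of_log_less:
  assumes "real m + log 2 (real k) < B"
  shows "real k \<le> 2 powr B * (1/2) ^ m"
proof (cases "k = 0")
  case False
  then have "real k = 2 powr (log 2 (real k))" by simp
  also have "\<dots> \<le> 2 powr (B - real m)"
    using assms by (intro powr_mono) auto
  also have "\<dots> = 2 powr B * (1/2) ^ m"
    by (simp add: powr_diff powr_realpow power_one_over)
  finally show ?thesis .
qed simp

lemma QK_less_obtains_program:
  assumes "QK U code \<epsilon> n \<tau> < ereal B"
  obtains \<sigma> where "U \<sigma> \<noteq> None" "finite (code (the (U \<sigma>)))"
    "orthonormal_set (2^n) (code (the (U \<sigma>)))"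
    "\<epsilon> < Re (\<Sum>w\<in>code (the (U \<sigma>)). expect (2^n) w \<tau>)"
    "real (length \<sigma>) + log 2 (real (card (code (the (U \<sigma>))))) < B"
  using assms unfolding QK_def Inf_less_iff by force

lemma card_orthonormal_family_le_of_QK_less:
  fixes v :: "nat \<Rightarrow> nat \<Rightarrow> complex"
  assumes "prefix_free U"
    and orth: "\<And>i j. i < N \<Longrightarrow> j < N \<Longrightarrow> cinner (2^s) (v i) (v j) = (if i = j then 1 else 0)"
    and QK_less: "\<And>i. i < N \<Longrightarrow> QK U code \<epsilon> s (pure_dm (v i)) < ereal B"
  shows "real N * \<epsilon> \<le> 2 powr B"
proof -
  define d where "d = (2::nat)^s"
  define G where "G \<sigma> = code (the (U \<sigma>))" for \<sigma>
  define good where "good i \<sigma> \<longleftrightarrow> U \<sigma> \<noteq> None \<and> finite (G \<sigma>) \<and> orthonormal_set d (G \<sigma>) \<and>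
      \<epsilon> < Re (\<Sum>w\<in>G \<sigma>. expect d w (pure_dm (v i))) \<and>
      real (length \<sigma>) + log 2 (real (card (G \<sigma>))) < B" for i \<sigma>
  have "\<exists>\<sigma>. good i \<sigma>" if "i < N" for i
    using QK_less_obtains_program[OF QK_less[OF that]] unfolding good_def G_def d_def by metis
  then obtain prog where prog: "\<And>i. i < N \<Longrightarrow> good i (prog i)" by metis
  define P where "P = prog ` {..<N}"
  define users where "users p = {i \<in> {..<N}. prog i = p}" for p
  have users_bound: "real (card (users p)) * \<epsilon> \<le> 2 powr B * (1/2) ^ length p"
    if "p \<in> P" for p
  proof -
    obtain i0 where "i0 < N" "prog i0 = p" using \<open>p \<in> P\<close> unfolding P_def by auto
    then have p: "finite (G p)" "orthonormal_set d (G p)"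
        "real (length p) + log 2 (real (card (G p))) < B"
      using prog[of i0] unfolding good_def by auto
    have "real (card (users p)) * \<epsilon> = (\<Sum>i\<in>users p. \<epsilon>)"
      by simp
    also have "\<dots> \<le> (\<Sum>i\<in>users p. Re (\<Sum>w\<in>G p. expect d w (pure_dm (v i))))"
      using prog unfolding users_def good_def by (intro sum_mono less_imp_le) auto
    also have "\<dots> \<le> real (card (G p))"
      using p(1,2) unfolding users_def d_def
      by (intro sum_weight_orthonormal_le_card[where N = N] orth) auto
    also have "\<dots> \<le> 2 powr B * (1/2) ^ length p"
      using p(3) by (rule nat_le_powr_of_log_less)
    finally show ?thesis .
  qed
  have "real N * \<epsilon> = (\<Sum>p\<in>P. real (card (users p)) * \<epsilon>)"
    using sum.group[of "{..<N}" P prog "\<lambda>_. \<epsilon>"]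
    by (simp add: P_def users_def)
  also have "\<dots> \<le> (\<Sum>p\<in>P. 2 powr B * (1/2) ^ length p)"
    using users_bound by (rule sum_mono)
  also have "\<dots> = 2 powr B * (\<Sum>p\<in>P. (1/2) ^ length p)"
    by (simp add: sum_distrib_left)
  also have "\<dots> \<le> 2 powr B"
    using kraft_inequality[OF \<open>prefix_free U\<close>, of P] prog
    by (simp add: P_def good_def mult_left_le)
  finally show ?thesis .
qed

theorem mainTheorem7:
  fixes U :: "bool list \<Rightarrow> nat option"
    and code :: "nat \<Rightarrow> (nat \<Rightarrow> complex) set"
    and \<epsilon> B :: real and s N :: nat and v :: "nat \<Rightarrow> nat \<Rightarrow> complex"
  assumes "prefix_free U"
    and "\<epsilon> > 0"
    and "\<And>i. i < N \<Longrightarrow> cvec (2^s) (v i)"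
    and "\<And>i j. i < N \<Longrightarrow> j < N \<Longrightarrow> cinner (2^s) (v i) (v j) = (if i = j then 1 else 0)"
    and "\<And>i. i < N \<Longrightarrow> QK U code \<epsilon> s (pure_dm (v i)) \<le> ereal B"
  shows "real N \<le> 2 powr B / \<epsilon>"
proof -
  have bound: "real N * \<epsilon> \<le> 2 powr B'" if "B < B'" for B'
    using that
    by (intro card_orthonormal_family_le_of_QK_less[OF assms(1,4)])
       (auto intro: le_less_trans[OF assms(5)])
  have "eventually (\<lambda>B'. real N * \<epsilon> \<le> 2 powr B') (at_right B)"
    using eventually_at_right_less[of B] by (rule eventually_mono) (rule bound)
  moreover have "((\<lambda>B'. 2 powr B') \<longlongrightarrow> 2 powr B) (at_right B)"
    by (intro tendsto_powr tendsto_const tendsto_ident_at) simp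
  ultimately have "real N * \<epsilon> \<le> 2 powr B"
    by (intro tendsto_le[OF _ _ tendsto_const]) simp_all
  then show ?thesis
    using assms(2) by (simp add: pos_le_divide_eq)
qed

end
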